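(* Let $G$ be a locally compact, Hausdorff, étale groupoid and $\alpha$ an automorphism of $G$. The groupoid $G^\infty_\alpha$ is minimal if and only if for each $y \in G^{(0)}$ the set $\bigcup_{n\le 0}\alpha^n([y])$ is dense in $G^{(0)}$. In particular, if $G$ is minimal, so is $G^\infty_\alpha$.
   Context: Let $E$ be the directed graph with one vertex $v$ and countably infinitely many edges $e_1,e_2,\dots$. Let $E^*$ be its finite paths (including $v$), $E^\infty$ its infinite paths, $P = E^*\sqcup E^\infty$, $|\mu|$ the length. $H_\infty$ is the groupoid $\{(\alpha x, |\alpha|-|\beta|, \beta x) : x\in P, \alpha,\beta\in E^*\}\subseteq P\times\mathbb{Z}\times P$ with $(x,m,y)(y,n,z)=(x,m+n,z)$, $(x,m,y)^{-1}=(y,-m,x)$, unit space identified with $P$, topology generated by the sets $Z((\alpha,\beta)\setminus F)=\{(\alpha x,|\alpha|-|\beta|,\beta x): x\in P, x\text{ does not begin with an edge in }F\}$ ($F$ finite); $c(x,m,y)=m$. An automorphism is a structure-preserving homeomorphism. $G^\infty_\alpha$ is $H_\infty\times G$ with product topology, unit space $H_\infty^{(0)}\times G^{(0)}$, $r(h,g)=(r(h),r(g))$, $s(h,g)=(s(h),\alpha^{c(h)}(s(g)))$, product $(h_1,g_1)(h_2,g_2)=(h_1h_2,g_1\alpha^{-c(h_1)}(g_2))$, inverse $(h,g)^{-1}=(h^{-1},\alpha^{c(h)}(g^{-1}))$. For $u \in G^{(0)}$, $[u] = \{r(g) : s(g) = u\}$; a groupoid is minimal if every orbit is dense in its unit space.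 *)

theory Defs
  imports "HOL-Analysis.Analysis"
begin

text \<open>A groupoid is given by its set of arrows, a (total, but only meaningful on
composable pairs) multiplication, an inverse map and a topology on the arrows.\<close>

record 'a tgroupoid =
  arr  :: "'a set"
  mult :: "'a \<Rightarrow> 'a \<Rightarrow> 'a"
  ginv :: "'a \<Rightarrow> 'a"
  top  :: "'a topology"

definition rng :: "'a tgroupoid \<Rightarrow> 'a \<Rightarrow> 'a" where
  "rng G g = mult G g (ginv G g)"

definition src :: "'a tgroupoid \<Rightarrow> 'a \<Rightarrow> 'a" where
  "src G g = mult G (ginv G g) g"

definition composable :: "'a tgroupoid \<Rightarrow> 'a \<Rightarrow> 'a \<Rightarrow> bool" where
  "composable G g h \<longleftrightarrow> g \<in> arr G \<and> h \<in> arr G \<and> src G g = rng G h"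

definition units :: "'a tgroupoid \<Rightarrow> 'a set" where
  "units G = rng G ` arr G"

definition groupoid :: "'a tgroupoid \<Rightarrow> bool" where
  "groupoid G \<longleftrightarrow>
     (\<forall>g\<in>arr G. ginv G g \<in> arr G \<and> ginv G (ginv G g) = g) \<and>
     (\<forall>g h. composable G g h \<longrightarrow> mult G g h \<in> arr G) \<and>
     (\<forall>g h k. composable G g h \<and> composable G h k \<longrightarrow>
        composable G (mult G g h) k \<and> composable G g (mult G h k) \<and>
        mult G (mult G g h) k = mult G g (mult G h k)) \<and>
     (\<forall>g h. composable G g h \<longrightarrow>
        mult G (ginv G g) (mult G g h) = h \<and> mult G (mult G g h) (ginv G h) = g)"

definition topological_groupoid :: "'a tgroupoid \<Rightarrow> bool" where
  "topological_groupoid G \<longleftrightarrow> groupoid G \<and> topspace (top G) = arr G \<and>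
     continuous_map (subtopology (prod_topology (top G) (top G)) {(g,h). composable G g h})
        (top G) (\<lambda>(g,h). mult G g h) \<and>
     continuous_map (top G) (top G) (ginv G)"

definition etale :: "'a tgroupoid \<Rightarrow> bool" where
  "etale G \<longleftrightarrow> (\<forall>g\<in>arr G. \<exists>U. openin (top G) U \<and> g \<in> U \<and>
      openin (subtopology (top G) (units G)) (rng G ` U) \<and>
      homeomorphic_map (subtopology (top G) U) (subtopology (top G) (rng G ` U)) (rng G))"

definition lch_etale_groupoid :: "'a tgroupoid \<Rightarrow> bool" where
  "lch_etale_groupoid G \<longleftrightarrow> topological_groupoid G \<and> etale G \<and>
     Hausdorff_space (top G) \<and> locally_compact_space (top G)"

definition groupoid_aut :: "'a tgroupoid \<Rightarrow> ('a \<Rightarrow> 'a) \<Rightarrow> bool" where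
  "groupoid_aut G \<alpha> \<longleftrightarrow> bij_betw \<alpha> (arr G) (arr G) \<and>
     (\<forall>g\<in>arr G. \<forall>h\<in>arr G. composable G (\<alpha> g) (\<alpha> h) \<longleftrightarrow> composable G g h) \<and>
     (\<forall>g h. composable G g h \<longrightarrow> \<alpha> (mult G g h) = mult G (\<alpha> g) (\<alpha> h)) \<and>
     homeomorphic_map (top G) (top G) \<alpha>"

definition zpow :: "'a tgroupoid \<Rightarrow> ('a \<Rightarrow> 'a) \<Rightarrow> int \<Rightarrow> 'a \<Rightarrow> 'a" where
  "zpow G \<alpha> n = (if 0 \<le> n then \<alpha> ^^ nat n else (inv_into (arr G) \<alpha>) ^^ nat (- n))"

definition orbit :: "'a tgroupoid \<Rightarrow> 'a \<Rightarrow> 'a set" where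
  "orbit G u = {rng G g | g. g \<in> arr G \<and> src G g = u}"

definition dense_in_units :: "'a tgroupoid \<Rightarrow> 'a set \<Rightarrow> bool" where
  "dense_in_units G S \<longleftrightarrow> (subtopology (top G) (units G)) closure_of S = units G"

definition minimal :: "'a tgroupoid \<Rightarrow> bool" where
  "minimal G \<longleftrightarrow> (\<forall>u\<in>units G. dense_in_units G (orbit G u))"

text \<open>Edges e_1, e_2, ... are encoded by natural numbers 0, 1, ...;
finite paths are lists of edges (the vertex v is the empty list),
infinite paths are sequences of edges.\<close>

datatype path = Fin "nat list" | Inf "nat \<Rightarrow> nat"

fun cat :: "nat list \<Rightarrow> path \<Rightarrow> path" where
  "cat a (Fin b) = Fin (a @ b)"
| "cat a (Inf f) = Inf (\<lambda>n. if n < length a then a ! n else f (n - length a))"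

fun first_edge :: "path \<Rightarrow> nat option" where
  "first_edge (Fin []) = None"
| "first_edge (Fin (e # _)) = Some e"
| "first_edge (Inf f) = Some (f 0)"

type_synonym harr = "path \<times> int \<times> path"

definition H_arrows :: "harr set" where
  "H_arrows = {(cat a x, int (length a) - int (length b), cat b x) | x a b. True}"

definition Zset :: "nat list \<Rightarrow> nat list \<Rightarrow> nat set \<Rightarrow> harr set" where
  "Zset a b F = {(cat a x, int (length a) - int (length b), cat b x) | x.
                   \<forall>e\<in>F. first_edge x \<noteq> Some e}"

definition H_inf :: "harr tgroupoid" where
  "H_inf = \<lparr> arr = H_arrows,
             mult = (\<lambda>(x,m,y) (y',n,z). (x, m + n, z)),
             ginv = (\<lambda>(x,m,y). (y, - m, x)),
             top = subtopology
                     (topology_generated_by {Zset a b F | a b F. finite F}) H_arrows \<rparr>"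

definition cocycle :: "harr \<Rightarrow> int" where
  "cocycle h = fst (snd h)"

definition Ginf :: "'a tgroupoid \<Rightarrow> ('a \<Rightarrow> 'a) \<Rightarrow> (harr \<times> 'a) tgroupoid" where
  "Ginf G \<alpha> = \<lparr> arr = arr H_inf \<times> arr G,
     mult = (\<lambda>(h1,g1) (h2,g2). (mult H_inf h1 h2,
                                mult G g1 (zpow G \<alpha> (- cocycle h1) g2))),
     ginv = (\<lambda>(h,g). (ginv H_inf h, zpow G \<alpha> (cocycle h) (ginv G g))),
     top = prod_topology (top H_inf) (top G) \<rparr>"

end

theory Submission
  imports Defs
begin

text \<open>The orbit of a unit \<open>((y,0,y), v)\<close> of \<open>G\<^sup>\<infinity>\<^sub>\<alpha>\<close> consists of the units
\<open>((p,0,p), u)\<close> with \<open>(p,m,y) \<in> H\<^sub>\<infinity>\<close> and \<open>u \<in> \<alpha>\<^sup>-\<^sup>m([v])\<close>. When \<open>y\<close> is the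
vertex, \<open>(p,m,y) \<in> H\<^sub>\<infinity>\<close> forces \<open>m \<ge> 0\<close>, so minimality of \<open>G\<^sup>\<infinity>\<^sub>\<alpha>\<close> makes
\<open>\<Union>\<^sub>n\<^sub>\<le>\<^sub>0 \<alpha>\<^sup>n([v])\<close> dense. Conversely, every neighbourhood of a unit
\<open>((x\<^sub>0,0,x\<^sub>0), u\<^sub>0)\<close> contains all units \<open>((x,0,x), u)\<close> with \<open>u\<close> near \<open>u\<^sub>0\<close> and \<open>x\<close> a
path that follows \<open>x\<^sub>0\<close> for some \<open>N\<close> edges and then takes an edge outside a finite set.
Repeating such an edge \<open>j + 1\<close> times before continuing along \<open>y\<close> gives arrows
\<open>(x, N+1+j, y) \<in> H\<^sub>\<infinity>\<close> for every \<open>j\<close>, so it suffices that \<open>\<Union>\<^sub>n\<^sub>\<le>\<^sub>0 \<alpha>\<^sup>n([v])\<close> meets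
every neighbourhood of \<open>\<alpha>\<^sup>N\<^sup>+\<^sup>1(u\<^sub>0)\<close>.\<close>

fun edge_at :: "path \<Rightarrow> nat \<Rightarrow> nat option" where
  "edge_at (Fin l) i = (if i < length l then Some (l ! i) else None)"
| "edge_at (Inf f) i = Some (f i)"

lemma edge_at_cat:
  "edge_at (cat a x) i = (if i < length a then Some (a ! i) else edge_at x (i - length a))"
  by (cases x) (auto simp: nth_append)

lemma first_edge_eq_edge_at: "first_edge x = edge_at x 0"
  by (cases x rule: first_edge.cases) auto

lemma cat_Nil [simp]: "cat [] x = x"
  by (cases x) auto

lemma cat_eq_Fin_Nil: "cat a x = Fin [] \<Longrightarrow> a = []"
  by (cases x) auto

lemma cat_cancel_right:
  assumes "cat a x = cat b x" and "length a = length b"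
  shows "a = b"
proof (rule nth_equalityI)
  fix i assume "i < length a"
  then show "a ! i = b ! i"
    using arg_cong[OF assms(1), of "\<lambda>x. edge_at x i"] assms(2) by (simp add: edge_at_cat)
qed fact

lemma cat_if_prefix:
  assumes "\<forall>i<length a. edge_at x i = Some (a ! i)"
  obtains y where "x = cat a y"
proof (cases x)
  case (Fin l)
  have "length a \<le> length l"
  proof (rule ccontr)
    assume "\<not> length a \<le> length l"
    then have "edge_at x (length l) = Some (a ! length l)" using assms by simp
    then show False using Fin by simp
  qed
  then have "take (length a) l = a"
    using assms Fin by (intro nth_equalityI) (auto split: if_splits)
  then have "x = cat a (Fin (drop (length a) l))"
    using Fin by (metis append_take_drop_id cat.simps(1))
  then show thesis by (rule that)
next
  case (Inf f)
  then have "x = cat a (Inf (\<lambda>n. f (n + length a)))"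
    using assms by (auto intro!: ext)
  then show thesis by (rule that)
qed

lemma diag_in_H_arrows: "(x, 0, x) \<in> H_arrows"
proof -
  have "(x, 0, x) = (cat [] x, int (length []) - int (length []), cat [] x)" by simp
  then show ?thesis unfolding H_arrows_def by blast
qed

lemma cat_in_H_arrows: "(cat a y, int (length a), y) \<in> H_arrows"
proof -
  have "(cat a y, int (length a), y) = (cat a y, int (length a) - int (length []), cat [] y)" by simp
  then show ?thesis unfolding H_arrows_def by blast
qed

lemma H_arrows_to_vertex_nonneg:
  assumes "(p, m, Fin []) \<in> H_arrows"
  shows "0 \<le> m"
proof -
  obtain x a b where eq: "(p, m, Fin []) = (cat a x, int (length a) - int (length b), cat b x)"
    using assms unfolding H_arrows_def by blast
  then have "b = []" using cat_eq_Fin_Nil[of b x] by simp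
  then show ?thesis using eq by simp
qed

section \<open>Neighbourhoods of units in the path groupoid\<close>

definition near_path :: "path \<Rightarrow> nat \<Rightarrow> nat set \<Rightarrow> path \<Rightarrow> bool" where
  "near_path x0 N D x \<longleftrightarrow> (\<forall>i<N. edge_at x i = edge_at x0 i) \<and>
     (\<forall>e\<in>D. edge_at x N = Some e \<longrightarrow> edge_at x0 N = Some e)"

lemma near_path_mono:
  assumes "near_path x0 N' D' x" and "N \<le> N'" and "D \<subseteq> D'"
  shows "near_path x0 N D x"
proof -
  have "edge_at x N = Some e \<longrightarrow> edge_at x0 N = Some e" if "e \<in> D" for e
  proof (cases "N < N'")
    case True
    then show ?thesis using assms(1) by (simp add: near_path_def)
  next
    case False
    then have "N = N'" "e \<in> D'" using assms(2,3) that by auto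
    then show ?thesis using assms(1) unfolding near_path_def by blast
  qed
  then show ?thesis using assms(1,2) by (simp add: near_path_def)
qed

lemma near_path_prefix_cat:
  assumes "\<forall>i<N. edge_at x0 i \<noteq> None" and "e \<notin> D"
  shows "near_path x0 N D (cat (map (\<lambda>i. the (edge_at x0 i)) [0..<N] @ e # es) y)"
  using assms unfolding near_path_def by (auto simp: edge_at_cat nth_append)

lemma Zset_diag_nbhd:
  assumes "(x0, 0, x0) \<in> Zset a b F"
  shows "(\<forall>i<length a. edge_at x0 i \<noteq> None) \<and>
         (\<forall>x. near_path x0 (length a) F x \<longrightarrow> (x, 0, x) \<in> Zset a b F)"
proof -
  obtain t where t: "x0 = cat a t" "x0 = cat b t" "0 = int (length a) - int (length b)"
      "\<forall>e\<in>F. first_edge t \<noteq> Some e"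
    using assms unfolding Zset_def by blast
  have "a = b"
    using t(3) by (intro cat_cancel_right[of a t b] trans[OF sym, OF t(1,2)]) simp
  have "(x, 0, x) \<in> Zset a b F" if near: "near_path x0 (length a) F x" for x
  proof -
    have "\<forall>i<length a. edge_at x i = Some (a ! i)"
      using near t(1) by (simp add: near_path_def edge_at_cat)
    then obtain y where x: "x = cat a y" by (rule cat_if_prefix)
    have "edge_at x (length a) = first_edge y" "edge_at x0 (length a) = first_edge t"
      using t(1) by (simp_all add: x edge_at_cat first_edge_eq_edge_at)
    then have "\<forall>e\<in>F. first_edge y \<noteq> Some e"
      using near t(4) unfolding near_path_def by metis
    then show ?thesis unfolding Zset_def x \<open>a = b\<close> by force
  qed
  then show ?thesis using t(1) by (simp add: edge_at_cat)
qed

lemma generate_topology_on_diag_nbhd: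
  assumes "generate_topology_on {Zset a b F | a b F. finite F} V" and "(x0, 0, x0) \<in> V"
  shows "\<exists>N D. finite D \<and> (\<forall>i<N. edge_at x0 i \<noteq> None) \<and>
           (\<forall>x. near_path x0 N D x \<longrightarrow> (x, 0, x) \<in> V)"
  using assms
proof (induction rule: generate_topology_on.induct)
  case (Int V1 V2)
  from Int.prems have "(x0, 0, x0) \<in> V1" "(x0, 0, x0) \<in> V2" by simp_all
  obtain N1 D1 where "finite D1" "\<forall>i<N1. edge_at x0 i \<noteq> None"
      "\<forall>x. near_path x0 N1 D1 x \<longrightarrow> (x, 0, x) \<in> V1"
    using Int.IH(1) \<open>(x0, 0, x0) \<in> V1\<close> by blast
  moreover obtain N2 D2 where "finite D2" "\<forall>i<N2. edge_at x0 i \<noteq> None"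
      "\<forall>x. near_path x0 N2 D2 x \<longrightarrow> (x, 0, x) \<in> V2"
    using Int.IH(2) \<open>(x0, 0, x0) \<in> V2\<close> by blast
  moreover have "near_path x0 N1 D1 x \<and> near_path x0 N2 D2 x"
    if "near_path x0 (max N1 N2) (D1 \<union> D2) x" for x
    using that near_path_mono[of x0 "max N1 N2" "D1 \<union> D2" x] by simp
  moreover have "i < max N1 N2 \<longleftrightarrow> i < N1 \<or> i < N2" for i
    by (rule less_max_iff_disj)
  ultimately have "finite (D1 \<union> D2) \<and> (\<forall>i<max N1 N2. edge_at x0 i \<noteq> None) \<and>
      (\<forall>x. near_path x0 (max N1 N2) (D1 \<union> D2) x \<longrightarrow> (x, 0, x) \<in> V1 \<inter> V2)"
    by blast
  then show ?case by blast
next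
  case (UN K)
  then obtain V where "V \<in> K" "(x0, 0, x0) \<in> V" by blast
  then obtain N D where "finite D" "\<forall>i<N. edge_at x0 i \<noteq> None"
      "\<forall>x. near_path x0 N D x \<longrightarrow> (x, 0, x) \<in> V"
    using UN.IH by meson
  then show ?case using \<open>V \<in> K\<close> by blast
next
  case (Basis s)
  then obtain a b F where "s = Zset a b F" "finite F" by blast
  with Basis.prems Zset_diag_nbhd[of x0 a b F] show ?case by blast
qed simp

lemma openin_H_inf_diag_nbhd:
  assumes "openin (top H_inf) A" and "(x0, 0, x0) \<in> A"
  obtains N D where "finite D" "\<forall>i<N. edge_at x0 i \<noteq> None"
    "\<forall>x. near_path x0 N D x \<longrightarrow> (x, 0, x) \<in> A"
proof -
  obtain V where "generate_topology_on {Zset a b F | a b F. finite F} V" "A = V \<inter> H_arrows"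
    using assms(1) unfolding H_inf_def
    by (auto simp: openin_subtopology openin_topology_generated_by_iff)
  then show thesis
    using that generate_topology_on_diag_nbhd[of V x0] assms(2) diag_in_H_arrows by blast
qed

lemma topspace_H_inf: "topspace (top H_inf) = H_arrows"
proof -
  have "H_arrows \<subseteq> \<Union>{Zset a b F | a b F. finite F}"
    unfolding H_arrows_def Zset_def by blast
  then show ?thesis unfolding H_inf_def by auto
qed

section \<open>Algebraic automorphisms of groupoids\<close>

definition algebraic_aut :: "'a tgroupoid \<Rightarrow> ('a \<Rightarrow> 'a) \<Rightarrow> bool" where
  "algebraic_aut G \<phi> \<longleftrightarrow> bij_betw \<phi> (arr G) (arr G) \<and>
     (\<forall>g\<in>arr G. \<forall>h\<in>arr G. composable G (\<phi> g) (\<phi> h) \<longleftrightarrow> composable G g h) \<and>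
     (\<forall>g h. composable G g h \<longrightarrow> \<phi> (mult G g h) = mult G (\<phi> g) (\<phi> h))"

lemma groupoid_aut_imp_algebraic_aut: "groupoid_aut G \<alpha> \<Longrightarrow> algebraic_aut G \<alpha>"
  unfolding groupoid_aut_def algebraic_aut_def by blast

lemma algebraic_aut_in_arr: "algebraic_aut G \<phi> \<Longrightarrow> g \<in> arr G \<Longrightarrow> \<phi> g \<in> arr G"
  unfolding algebraic_aut_def bij_betw_def by auto

lemma algebraic_aut_composable:
  "algebraic_aut G \<phi> \<Longrightarrow> composable G g h \<Longrightarrow> composable G (\<phi> g) (\<phi> h)"
  unfolding algebraic_aut_def composable_def by auto

lemma algebraic_aut_mult:
  "algebraic_aut G \<phi> \<Longrightarrow> composable G g h \<Longrightarrow> \<phi> (mult G g h) = mult G (\<phi> g) (\<phi> h)"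
  unfolding algebraic_aut_def by auto

lemma algebraic_aut_id: "algebraic_aut G id"
  unfolding algebraic_aut_def by auto

lemma algebraic_aut_comp:
  assumes \<phi>: "algebraic_aut G \<phi>" and \<psi>: "algebraic_aut G \<psi>"
  shows "algebraic_aut G (\<phi> \<circ> \<psi>)"
  unfolding algebraic_aut_def
proof (intro conjI ballI allI impI)
  show "bij_betw (\<phi> \<circ> \<psi>) (arr G) (arr G)"
    using \<phi> \<psi> unfolding algebraic_aut_def by (blast intro: bij_betw_trans)
next
  fix g h assume "g \<in> arr G" "h \<in> arr G"
  then show "composable G ((\<phi> \<circ> \<psi>) g) ((\<phi> \<circ> \<psi>) h) \<longleftrightarrow> composable G g h"
    using \<phi> \<psi> algebraic_aut_in_arr[OF \<psi>] unfolding algebraic_aut_def by simp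
next
  fix g h assume "composable G g h"
  then show "(\<phi> \<circ> \<psi>) (mult G g h) = mult G ((\<phi> \<circ> \<psi>) g) ((\<phi> \<circ> \<psi>) h)"
    using \<phi> \<psi> by (simp add: algebraic_aut_mult algebraic_aut_composable)
qed

lemma algebraic_aut_funpow: "algebraic_aut G \<phi> \<Longrightarrow> algebraic_aut G (\<phi> ^^ n)"
  by (induction n) (simp_all add: algebraic_aut_id algebraic_aut_comp)

context
  fixes G :: "'a tgroupoid"
  assumes groupoid: "groupoid G"
begin

lemma ginv_in_arr: "g \<in> arr G \<Longrightarrow> ginv G g \<in> arr G"
  and ginv_ginv: "g \<in> arr G \<Longrightarrow> ginv G (ginv G g) = g"
  using groupoid unfolding groupoid_def by auto

lemma composable_ginv_right: "g \<in> arr G \<Longrightarrow> composable G g (ginv G g)"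
  and composable_ginv_left: "g \<in> arr G \<Longrightarrow> composable G (ginv G g) g"
  using ginv_in_arr ginv_ginv unfolding composable_def src_def rng_def by auto

lemma mult_in_arr: "composable G g h \<Longrightarrow> mult G g h \<in> arr G"
  using groupoid unfolding groupoid_def by auto

lemma groupoid_assoc:
  "composable G g h \<Longrightarrow> composable G h k \<Longrightarrow>
     composable G (mult G g h) k \<and> composable G g (mult G h k) \<and>
     mult G (mult G g h) k = mult G g (mult G h k)"
  using groupoid unfolding groupoid_def by blast

lemma groupoid_cancel:
  "composable G g h \<Longrightarrow> mult G (ginv G g) (mult G g h) = h \<and> mult G (mult G g h) (ginv G h) = g"
  using groupoid unfolding groupoid_def by blast

lemma rng_in_arr: "g \<in> arr G \<Longrightarrow> rng G g \<in> arr G"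
  and src_in_arr: "g \<in> arr G \<Longrightarrow> src G g \<in> arr G"
  unfolding rng_def src_def using mult_in_arr composable_ginv_right composable_ginv_left by auto

lemma units_subset_arr: "units G \<subseteq> arr G"
  unfolding units_def using rng_in_arr by auto

lemma algebraic_aut_ginv:
  assumes \<phi>: "algebraic_aut G \<phi>" and g: "g \<in> arr G"
  shows "\<phi> (ginv G g) = ginv G (\<phi> g)"
proof -
  let ?k = "\<phi> g" and ?j = "\<phi> (ginv G g)"
  have gg': "composable G g (ginv G g)" and g'g: "composable G (ginv G g) g"
    using g by (simp_all add: composable_ginv_right composable_ginv_left)
  have kj: "composable G ?k ?j" and jk: "composable G ?j ?k"
    using gg' g'g by (simp_all add: algebraic_aut_composable[OF \<phi>])
  have k: "?k \<in> arr G" using algebraic_aut_in_arr[OF \<phi> g] .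
  \<comment> \<open>apply \<open>\<phi>\<close> to \<open>(g g\<^sup>-\<^sup>1) g = g\<close>, then cancel \<open>k\<close> on the right\<close>
  have "composable G (mult G g (ginv G g)) g" and "mult G (mult G g (ginv G g)) g = g"
    using groupoid_assoc[OF gg' g'g] groupoid_cancel[OF gg'] ginv_ginv[OF g] by auto
  then have "mult G (mult G ?k ?j) ?k = ?k"
    using algebraic_aut_mult[OF \<phi>] gg' by metis
  then have "mult G ?k ?j = mult G ?k (ginv G ?k)"
    using groupoid_cancel groupoid_assoc[OF kj jk] by metis
  then have "?j = mult G (ginv G ?k) (mult G ?k (ginv G ?k))"
    using groupoid_cancel[OF kj] by simp
  also have "\<dots> = ginv G ?k"
    using groupoid_cancel[OF composable_ginv_right[OF k]] by blast
  finally show ?thesis .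
qed

lemma algebraic_aut_rng: "algebraic_aut G \<phi> \<Longrightarrow> g \<in> arr G \<Longrightarrow> \<phi> (rng G g) = rng G (\<phi> g)"
  unfolding rng_def by (simp add: algebraic_aut_mult composable_ginv_right algebraic_aut_ginv)

lemma algebraic_aut_src: "algebraic_aut G \<phi> \<Longrightarrow> g \<in> arr G \<Longrightarrow> \<phi> (src G g) = src G (\<phi> g)"
  unfolding src_def by (simp add: algebraic_aut_mult composable_ginv_left algebraic_aut_ginv)

lemma algebraic_aut_units: "algebraic_aut G \<phi> \<Longrightarrow> u \<in> units G \<Longrightarrow> \<phi> u \<in> units G"
  unfolding units_def by (auto simp: algebraic_aut_rng algebraic_aut_in_arr)

lemma algebraic_aut_inv_into:
  assumes \<phi>: "algebraic_aut G \<phi>"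
  shows "algebraic_aut G (inv_into (arr G) \<phi>)"
proof -
  let ?\<psi> = "inv_into (arr G) \<phi>"
  have bij: "bij_betw \<phi> (arr G) (arr G)" using \<phi> unfolding algebraic_aut_def by blast
  then have bij': "bij_betw ?\<psi> (arr G) (arr G)" by (rule bij_betw_inv_into)
  have \<phi>\<psi>: "\<phi> (?\<psi> x) = x" and \<psi>_in: "?\<psi> x \<in> arr G" if "x \<in> arr G" for x
    using that bij bij' by (simp_all add: bij_betw_inv_into_right bij_betw_apply)
  have comp: "composable G (?\<psi> g) (?\<psi> h) \<longleftrightarrow> composable G g h"
    if "g \<in> arr G" "h \<in> arr G" for g h
    using \<phi> that \<psi>_in \<phi>\<psi> unfolding algebraic_aut_def by metis
  have "?\<psi> (mult G g h) = mult G (?\<psi> g) (?\<psi> h)" if gh: "composable G g h" for g h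
  proof (rule inv_into_f_eq)
    have g: "g \<in> arr G" and h: "h \<in> arr G" using gh unfolding composable_def by auto
    then have \<psi>gh: "composable G (?\<psi> g) (?\<psi> h)" using comp gh by blast
    then show "mult G (?\<psi> g) (?\<psi> h) \<in> arr G" by (rule mult_in_arr)
    show "\<phi> (mult G (?\<psi> g) (?\<psi> h)) = mult G g h"
      using algebraic_aut_mult[OF \<phi> \<psi>gh] \<phi>\<psi>[OF g] \<phi>\<psi>[OF h] by simp
  qed (use bij in \<open>simp add: bij_betw_def\<close>)
  then show ?thesis unfolding algebraic_aut_def using bij' comp by blast
qed

end

lemma funpow_left_inverse:
  assumes "\<forall>x\<in>S. f x \<in> S" and "\<forall>x\<in>S. g (f x) = x" and "x \<in> S"
  shows "(g ^^ n) ((f ^^ n) x) = x"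
  using assms(3)
proof (induction n arbitrary: x)
  case (Suc n)
  have "(g ^^ Suc n) ((f ^^ Suc n) x) = g ((g ^^ n) ((f ^^ n) (f x)))"
    by (simp only: funpow.simps(2) o_apply funpow_swap1)
  also have "\<dots> = x" using Suc assms(1,2) by simp
  finally show ?case .
qed simp

lemma zpow_of_nat: "zpow G \<alpha> (int n) = \<alpha> ^^ n"
  unfolding zpow_def by simp

lemma zpow_minus_of_nat: "zpow G \<alpha> (- int n) = inv_into (arr G) \<alpha> ^^ n"
  unfolding zpow_def by (cases "n = 0") simp_all

lemma zpow_add_nonpos:
  assumes "m \<le> 0" and "n \<le> 0"
  shows "zpow G \<alpha> (m + n) = zpow G \<alpha> m \<circ> zpow G \<alpha> n"
proof -
  obtain i j where "m = - int i" "n = - int j"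
    using assms by (metis minus_minus neg_0_le_iff_le nonneg_int_cases)
  then have "m + n = - int (i + j)" by simp
  then show ?thesis using \<open>m = - int i\<close> \<open>n = - int j\<close> by (metis zpow_minus_of_nat funpow_add)
qed

lemma zpow_minus_zpow:
  assumes "bij_betw \<alpha> (arr G) (arr G)" and "x \<in> arr G"
  shows "zpow G \<alpha> (- n) (zpow G \<alpha> n x) = x"
proof -
  let ?\<beta> = "inv_into (arr G) \<alpha>"
  have \<alpha>_in: "\<forall>x\<in>arr G. \<alpha> x \<in> arr G" and \<beta>_in: "\<forall>x\<in>arr G. ?\<beta> x \<in> arr G"
    using assms(1) bij_betw_inv_into[OF assms(1)] by (simp_all add: bij_betw_apply)
  have \<beta>\<alpha>: "\<forall>x\<in>arr G. ?\<beta> (\<alpha> x) = x" and \<alpha>\<beta>: "\<forall>x\<in>arr G. \<alpha> (?\<beta> x) = x"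
    using assms(1) by (simp_all add: bij_betw_inv_into_left bij_betw_inv_into_right)
  show ?thesis
  proof (cases "0 \<le> n")
    case True
    then obtain k where "n = int k" using nonneg_int_cases by blast
    then show ?thesis
      using funpow_left_inverse[OF \<alpha>_in \<beta>\<alpha> assms(2)] by (simp add: zpow_of_nat zpow_minus_of_nat)
  next
    case False
    then have "n = - int (nat (- n))" by simp
    then show ?thesis
      using funpow_left_inverse[OF \<beta>_in \<alpha>\<beta> assms(2)]
      by (metis minus_minus zpow_of_nat zpow_minus_of_nat)
  qed
qed

lemma algebraic_aut_zpow:
  assumes "groupoid G" and "algebraic_aut G \<alpha>"
  shows "algebraic_aut G (zpow G \<alpha> n)"
  unfolding zpow_def using assms by (simp add: algebraic_aut_funpow algebraic_aut_inv_into)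

lemma continuous_map_funpow: "continuous_map X X f \<Longrightarrow> continuous_map X X (f ^^ n)"
  by (induction n) (simp_all add: continuous_map_compose)

lemma continuous_map_inv_into:
  assumes "homeomorphic_map X Y f"
  shows "continuous_map Y X (inv_into (topspace X) f)"
proof -
  have "open_map X Y f" "f ` topspace X = topspace Y" "inj_on f (topspace X)"
    using assms by (auto simp: homeomorphic_eq_everything_map)
  then show ?thesis
    by (subst open_eq_continuous_inverse_map[symmetric]) (auto intro: inv_into_into f_inv_into_f)
qed

lemma continuous_map_zpow:
  assumes "homeomorphic_map (top G) (top G) \<alpha>" and "topspace (top G) = arr G"
  shows "continuous_map (top G) (top G) (zpow G \<alpha> n)"
  using continuous_map_inv_into[OF assms(1)] homeomorphic_imp_continuous_map[OF assms(1)] assms(2)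
  unfolding zpow_def by (simp add: continuous_map_funpow)

section \<open>Units and orbits of the groupoid \<open>G\<^sup>\<infinity>\<^sub>\<alpha>\<close>\<close>

lemma arr_Ginf: "arr (Ginf G \<alpha>) = H_arrows \<times> arr G"
  unfolding Ginf_def H_inf_def by simp

lemma top_Ginf: "top (Ginf G \<alpha>) = prod_topology (top H_inf) (top G)"
  unfolding Ginf_def by simp

context
  fixes G :: "'a tgroupoid" and \<alpha> :: "'a \<Rightarrow> 'a"
  assumes groupoid: "groupoid G" and aut: "algebraic_aut G \<alpha>"
begin

lemma rng_Ginf: "g \<in> arr G \<Longrightarrow> rng (Ginf G \<alpha>) ((p, m, q), g) = ((p, 0, p), rng G g)"
  using zpow_minus_zpow[of \<alpha> G "ginv G g" m] aut ginv_in_arr[OF groupoid]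
  unfolding rng_def Ginf_def H_inf_def cocycle_def algebraic_aut_def by simp

lemma src_Ginf: "g \<in> arr G \<Longrightarrow> src (Ginf G \<alpha>) ((p, m, q), g) = ((q, 0, q), zpow G \<alpha> m (src G g))"
  using algebraic_aut_mult[OF algebraic_aut_zpow[OF groupoid aut] composable_ginv_left[OF groupoid]]
  unfolding src_def Ginf_def H_inf_def cocycle_def by simp

lemma units_Ginf: "units (Ginf G \<alpha>) = range (\<lambda>p. (p, 0, p)) \<times> units G"
proof
  show "units (Ginf G \<alpha>) \<subseteq> range (\<lambda>p. (p, 0, p)) \<times> units G"
    unfolding units_def arr_Ginf by (auto simp: rng_Ginf)
  have "((p, 0, p), rng G g) \<in> units (Ginf G \<alpha>)" if "g \<in> arr G" for p g
    using that diag_in_H_arrows[of p] rng_Ginf[OF that, of p 0 p]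
    unfolding units_def arr_Ginf by (metis SigmaI image_eqI)
  then show "range (\<lambda>p. (p, 0, p)) \<times> units G \<subseteq> units (Ginf G \<alpha>)"
    unfolding units_def by blast
qed

lemma orbit_Ginf:
  "orbit (Ginf G \<alpha>) ((y, 0, y), v) =
     {((p, 0, p), u) | p m u. (p, m, y) \<in> H_arrows \<and> u \<in> zpow G \<alpha> (- m) ` orbit G v}"
proof (intro equalityI subsetI)
  fix w assume "w \<in> orbit (Ginf G \<alpha>) ((y, 0, y), v)"
  then obtain p m q g where pmq: "(p, m, q) \<in> H_arrows" and g: "g \<in> arr G"
    and src: "src (Ginf G \<alpha>) ((p, m, q), g) = ((y, 0, y), v)"
    and w: "w = rng (Ginf G \<alpha>) ((p, m, q), g)"
    unfolding orbit_def arr_Ginf by auto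
  then have "q = y" and "src G (zpow G \<alpha> m g) = v"
    using src_Ginf algebraic_aut_src[OF groupoid algebraic_aut_zpow[OF groupoid aut]] by auto
  then have "rng G (zpow G \<alpha> m g) \<in> orbit G v"
    using algebraic_aut_in_arr[OF algebraic_aut_zpow[OF groupoid aut] g] unfolding orbit_def by blast
  moreover have "rng G g = zpow G \<alpha> (- m) (rng G (zpow G \<alpha> m g))"
    using g aut
    by (simp add: algebraic_aut_rng[OF groupoid algebraic_aut_zpow[OF groupoid aut], symmetric]
        zpow_minus_zpow rng_in_arr[OF groupoid] algebraic_aut_def)
  ultimately show "w \<in> {((p, 0, p), u) | p m u. (p, m, y) \<in> H_arrows \<and> u \<in> zpow G \<alpha> (- m) ` orbit G v}"
    using pmq w rng_Ginf[OF g] \<open>q = y\<close> by blast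
next
  fix w :: "harr \<times> 'a"
  assume "w \<in> {((p, 0, p), u) | p m u. (p, m, y) \<in> H_arrows \<and> u \<in> zpow G \<alpha> (- m) ` orbit G v}"
  then obtain p m g' where pmy: "(p, m, y) \<in> H_arrows" and g': "g' \<in> arr G" "src G g' = v"
    and w: "w = ((p, 0, p), zpow G \<alpha> (- m) (rng G g'))"
    unfolding orbit_def by blast
  define g where "g = zpow G \<alpha> (- m) g'"
  have g: "g \<in> arr G"
    unfolding g_def using algebraic_aut_in_arr[OF algebraic_aut_zpow[OF groupoid aut] g'(1)] .
  have "src G g = zpow G \<alpha> (- m) (src G g')"
    unfolding g_def using algebraic_aut_src[OF groupoid algebraic_aut_zpow[OF groupoid aut] g'(1)] ..
  then have "zpow G \<alpha> m (src G g) = v"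
    using g' aut zpow_minus_zpow[of \<alpha> G "src G g'" "- m"] src_in_arr[OF groupoid g'(1)]
    unfolding algebraic_aut_def by simp
  then have "src (Ginf G \<alpha>) ((p, m, y), g) = ((y, 0, y), v)" by (simp add: src_Ginf[OF g])
  moreover have "rng G g = zpow G \<alpha> (- m) (rng G g')"
    unfolding g_def using algebraic_aut_rng[OF groupoid algebraic_aut_zpow[OF groupoid aut] g'(1)] ..
  then have "rng (Ginf G \<alpha>) ((p, m, y), g) = w" by (simp add: rng_Ginf[OF g] w)
  ultimately show "w \<in> orbit (Ginf G \<alpha>) ((y, 0, y), v)"
    unfolding orbit_def arr_Ginf using pmy g by blast
qed

end

section \<open>Density of orbits\<close>

lemma dense_in_units_iff:
  assumes "units X \<subseteq> topspace (top X)"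
  shows "dense_in_units X S \<longleftrightarrow>
     (\<forall>u\<in>units X. \<forall>T. openin (top X) T \<and> u \<in> T \<longrightarrow> (\<exists>s\<in>S. s \<in> T \<and> s \<in> units X))"
proof -
  have topspace: "topspace (subtopology (top X) (units X)) = units X" using assms by auto
  have "dense_in_units X S \<longleftrightarrow> units X \<subseteq> subtopology (top X) (units X) closure_of S"
    unfolding dense_in_units_def using closure_of_subset_topspace[of _ S] topspace by blast
  also have "\<dots> \<longleftrightarrow>
      (\<forall>u\<in>units X. \<forall>T. openin (top X) T \<and> u \<in> T \<longrightarrow> (\<exists>s\<in>S. s \<in> T \<and> s \<in> units X))"
    unfolding in_closure_of subset_iff topspace openin_subtopology by blast
  finally show ?thesis .
qed

definition backward_orbit :: "'a tgroupoid \<Rightarrow> ('a \<Rightarrow> 'a) \<Rightarrow> 'a \<Rightarrow> 'a set" where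
  "backward_orbit G \<alpha> y = (\<Union>n\<in>{n::int. n \<le> 0}. zpow G \<alpha> n ` orbit G y)"

context
  fixes G :: "'a tgroupoid" and \<alpha> :: "'a \<Rightarrow> 'a"
  assumes groupoid: "groupoid G" and aut: "algebraic_aut G \<alpha>"
    and topspace: "topspace (top G) = arr G"
begin

lemma units_subset_topspace: "units G \<subseteq> topspace (top G)"
  using units_subset_arr[OF groupoid] topspace by simp

lemma units_Ginf_subset_topspace: "units (Ginf G \<alpha>) \<subseteq> topspace (top (Ginf G \<alpha>))"
  using units_subset_topspace diag_in_H_arrows
  by (auto simp: units_Ginf[OF groupoid aut] top_Ginf topspace_H_inf)

lemma dense_backward_orbit_if_minimal:
  assumes "minimal G" and "v \<in> units G"
  shows "dense_in_units G (backward_orbit G \<alpha> v)"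
proof -
  have "orbit G v \<subseteq> backward_orbit G \<alpha> v"
    unfolding backward_orbit_def by (force simp: zpow_def)
  then show ?thesis
    using assms unfolding minimal_def dense_in_units_iff[OF units_subset_topspace] by blast
qed

lemma dense_backward_orbit_if_minimal_Ginf:
  assumes minimal: "minimal (Ginf G \<alpha>)" and v: "v \<in> units G"
  shows "dense_in_units G (backward_orbit G \<alpha> v)"
  unfolding dense_in_units_iff[OF units_subset_topspace]
proof (intro ballI allI impI)
  fix u T assume u: "u \<in> units G" and T: "openin (top G) T \<and> u \<in> T"
  let ?vertex = "(Fin [], 0, Fin [])"
  have "dense_in_units (Ginf G \<alpha>) (orbit (Ginf G \<alpha>) (?vertex, v))"
    using minimal v unfolding minimal_def units_Ginf[OF groupoid aut] by blast
  moreover have "(?vertex, u) \<in> units (Ginf G \<alpha>)"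
    using u by (simp add: units_Ginf[OF groupoid aut])
  moreover have "openin (top (Ginf G \<alpha>)) (H_arrows \<times> T)" and "(?vertex, u) \<in> H_arrows \<times> T"
    using T diag_in_H_arrows by (simp_all add: top_Ginf openin_prod_Times_iff flip: topspace_H_inf)
  ultimately obtain p m w where "(p, m, Fin []) \<in> H_arrows" "w \<in> zpow G \<alpha> (- m) ` orbit G v"
    and "w \<in> T" "w \<in> units G"
    unfolding dense_in_units_iff[OF units_Ginf_subset_topspace] orbit_Ginf[OF groupoid aut]
      units_Ginf[OF groupoid aut]
    by blast
  moreover from this have "- m \<le> 0" using H_arrows_to_vertex_nonneg by simp
  ultimately show "\<exists>s\<in>backward_orbit G \<alpha> v. s \<in> T \<and> s \<in> units G"
    unfolding backward_orbit_def by blast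
qed

lemma minimal_Ginf_if_dense_backward_orbits:
  assumes homeo: "homeomorphic_map (top G) (top G) \<alpha>"
    and dense: "\<forall>v\<in>units G. dense_in_units G (backward_orbit G \<alpha> v)"
  shows "minimal (Ginf G \<alpha>)"
proof -
  have "\<exists>w\<in>orbit (Ginf G \<alpha>) ((y, 0, y), v). w \<in> W \<and> w \<in> units (Ginf G \<alpha>)"
    if v: "v \<in> units G" and u0: "u0 \<in> units G"
      and W: "openin (top (Ginf G \<alpha>)) W" "((x0, 0, x0), u0) \<in> W" for y v x0 u0 W
  proof -
    obtain A B where A: "openin (top H_inf) A" "(x0, 0, x0) \<in> A"
      and B: "openin (top G) B" "u0 \<in> B" and "A \<times> B \<subseteq> W"
      using W unfolding top_Ginf openin_prod_topology_alt by blast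
    obtain N D where "finite D" and x0: "\<forall>i<N. edge_at x0 i \<noteq> None"
      and near: "\<forall>x. near_path x0 N D x \<longrightarrow> (x, 0, x) \<in> A"
      using openin_H_inf_diag_nbhd[OF A] .
    obtain e where "e \<notin> D" using ex_new_if_finite[OF infinite_UNIV_nat \<open>finite D\<close>] by blast
    \<comment> \<open>\<open>x\<close> copies \<open>N\<close> edges of \<open>x0\<close>, then needs an edge outside \<open>D\<close> before reaching \<open>y\<close>\<close>
    define M where "M = Suc N"
    define B' where "B' = {z \<in> topspace (top G). zpow G \<alpha> (- int M) z \<in> B}"
    have "openin (top G) B'"
      unfolding B'_def using continuous_map_zpow[OF homeo topspace] B(1)
      by (rule openin_continuous_map_preimage)
    moreover have "zpow G \<alpha> (int M) u0 \<in> units G \<inter> B'"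
      using B(2) u0 units_subset_topspace algebraic_aut_units[OF groupoid algebraic_aut_zpow[OF groupoid aut]]
        zpow_minus_zpow[of \<alpha> G u0 "int M"] aut units_subset_arr[OF groupoid]
      unfolding B'_def algebraic_aut_def by auto
    ultimately obtain s where "s \<in> backward_orbit G \<alpha> v" "s \<in> B'"
      using dense v unfolding dense_in_units_iff[OF units_subset_topspace] by blast
    then obtain n z where "n \<le> 0" and z: "z \<in> orbit G v" and s: "s = zpow G \<alpha> n z"
      unfolding backward_orbit_def by blast
    define L where "L = int M - n"
    define a where "a = map (\<lambda>i. the (edge_at x0 i)) [0..<N] @ e # replicate (nat (- n)) e"
    define x where "x = cat a y"
    have "int (length a) = L" using \<open>n \<le> 0\<close> unfolding a_def L_def M_def by simp
    then have "(x, L, y) \<in> H_arrows" unfolding x_def using cat_in_H_arrows by metis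
    moreover have "zpow G \<alpha> (- L) z \<in> B"
      using \<open>s \<in> B'\<close> zpow_add_nonpos[of "- int M" n G \<alpha>] \<open>n \<le> 0\<close> unfolding B'_def s L_def by simp
    moreover have "zpow G \<alpha> (- L) z \<in> units G"
      using z algebraic_aut_units[OF groupoid algebraic_aut_zpow[OF groupoid aut]]
      unfolding orbit_def units_def by blast
    moreover have "(x, 0, x) \<in> A"
      using near near_path_prefix_cat[OF x0 \<open>e \<notin> D\<close>] unfolding x_def a_def by blast
    ultimately show ?thesis
      using z \<open>A \<times> B \<subseteq> W\<close>
      unfolding orbit_Ginf[OF groupoid aut] units_Ginf[OF groupoid aut] by blast
  qed
  then show ?thesis
    unfolding minimal_def dense_in_units_iff[OF units_Ginf_subset_topspace] units_Ginf[OF groupoid aut]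
    by blast
qed

end

theorem proposition5p3:
  fixes G :: "'a tgroupoid" and \<alpha> :: "'a \<Rightarrow> 'a"
  assumes "lch_etale_groupoid G"
    and "groupoid_aut G \<alpha>"
  shows "(minimal (Ginf G \<alpha>) \<longleftrightarrow>
            (\<forall>y\<in>units G. dense_in_units G (\<Union>n\<in>{n::int. n \<le> 0}. zpow G \<alpha> n ` orbit G y)))
         \<and> (minimal G \<longrightarrow> minimal (Ginf G \<alpha>))"
proof -
  have groupoid: "groupoid G" and topspace: "topspace (top G) = arr G"
    using assms(1) unfolding lch_etale_groupoid_def topological_groupoid_def by blast+
  have aut: "algebraic_aut G \<alpha>" and homeo: "homeomorphic_map (top G) (top G) \<alpha>"
    using assms(2) groupoid_aut_imp_algebraic_aut unfolding groupoid_aut_def by blast+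
  have "minimal (Ginf G \<alpha>) \<longleftrightarrow> (\<forall>y\<in>units G. dense_in_units G (backward_orbit G \<alpha> y))"
    using dense_backward_orbit_if_minimal_Ginf[OF groupoid aut topspace]
      minimal_Ginf_if_dense_backward_orbits[OF groupoid aut topspace homeo] by blast
  moreover have "minimal G \<Longrightarrow> \<forall>y\<in>units G. dense_in_units G (backward_orbit G \<alpha> y)"
    using dense_backward_orbit_if_minimal[OF groupoid aut topspace] by blast
  ultimately show ?thesis unfolding backward_orbit_def by blast
qed

end
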